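(* Let $N \ge 0$ and $k \ge 1$ be integers and let $f:\{0,\dots,N\}^k \to \{\mathbf{true},\mathbf{false}\}$ be a feasibility function. Let $\vec x \in \{0,\dots,N\}^k$ with $f(\vec x) = \mathbf{true}$. Then the procedure $\textsc{SearchParetoPoint}(\vec x,k,f)$ returns a Pareto point $\vec z$ of $f$ with $\vec z \le_k \vec x$.
   Context: For $\vec x = (x_1,\dots,x_k), \vec x' = (x'_1,\dots,x'_k) \in \{0,\dots,N\}^k$, write $\vec x \le_k \vec x'$ iff $x_i \le x'_i$ for all $i$; $\vec x$ is smaller than $\vec x'$ if $\vec x \le_k \vec x'$ and $\vec x \ne \vec x'$. A feasibility function is a map $f:\{0,\dots,N\}^k\to\{\mathbf{true},\mathbf{false}\}$ that is monotone: if $f(\vec x)=\mathbf{true}$ then $f(\vec x')=\mathbf{true}$ for every $\vec x'$ greater than $\vec x$. A point $\vec x$ is a Pareto point (Pareto optimum) of $f$ if $f(\vec x)=\mathbf{true}$ and $f(\vec x')=\mathbf{false}$ for every $\vec x'$ smaller than $\vec x$. Procedure $\textsc{SearchParetoPoint}(\vec x,k,f)$: for $i = 1,\dots,k$ in order: set $\mathit{max} := x_i+1$ and $\mathit{min} := 0$; while $\mathit{max}-\mathit{min} > 1$: set $\mathit{mid} := \mathit{min} + \lfloor (\mathit{max}-\mathit{min}-1)/2 \rfloor$, set $x_i := \mathit{mid}$, and if $f(\vec x) = \mathbf{true}$ set $\mathit{max} := \mathit{mid}+1$, otherwise set $\mathit{min} := \mathit{mid}+1$; after the while loop set $x_i :=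 \mathit{min}$. After all $k$ coordinates have been processed, return the current $\vec x$. *)

theory Defs
  imports Main
begin

text \<open>Points of {0,...,N}^k are represented as lists of naturals of length k;
  coordinate x_i (1-based in the paper) is x ! (i-1).\<close>

definition grid :: "nat \<Rightarrow> nat \<Rightarrow> nat list set" where
  "grid N k = {x. length x = k \<and> (\<forall>i<k. x ! i \<le> N)}"

definition leq_k :: "nat \<Rightarrow> nat list \<Rightarrow> nat list \<Rightarrow> bool" where
  "leq_k k x y \<longleftrightarrow> (\<forall>i<k. x ! i \<le> y ! i)"

definition smaller :: "nat \<Rightarrow> nat list \<Rightarrow> nat list \<Rightarrow> bool" where
  "smaller k x y \<longleftrightarrow> leq_k k x y \<and> x \<noteq> y"

definition feasibility_function :: "nat \<Rightarrow> nat \<Rightarrow> (nat list \<Rightarrow> bool) \<Rightarrow> bool" where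
  "feasibility_function N k f \<longleftrightarrow>
     (\<forall>x\<in>grid N k. \<forall>x'\<in>grid N k. f x \<and> smaller k x x' \<longrightarrow> f x')"

definition pareto_point :: "nat \<Rightarrow> nat \<Rightarrow> (nat list \<Rightarrow> bool) \<Rightarrow> nat list \<Rightarrow> bool" where
  "pareto_point N k f x \<longleftrightarrow> x \<in> grid N k \<and> f x \<and>
     (\<forall>x'\<in>grid N k. smaller k x' x \<longrightarrow> \<not> f x')"

text \<open>The inner while loop of SearchParetoPoint for coordinate i, with state
  (x, min, max).\<close>
function search_coord :: "(nat list \<Rightarrow> bool) \<Rightarrow> nat \<Rightarrow> nat list \<Rightarrow> nat \<Rightarrow> nat \<Rightarrow> nat list" where
  "search_coord f i x mn mx =
     (if mx - mn > 1 then
        (let mid = mn + (mx - mn - 1) div 2; x' = x[i := mid] in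
         if f x' then search_coord f i x' mn (mid + 1)
         else search_coord f i x' (mid + 1) mx)
      else x[i := mn])"
  by pat_completeness auto
termination
  by (relation "measure (\<lambda>(f, i, x, mn, mx). mx - mn)") auto

definition search_pareto_point :: "nat list \<Rightarrow> nat \<Rightarrow> (nat list \<Rightarrow> bool) \<Rightarrow> nat list" where
  "search_pareto_point x k f =
     foldl (\<lambda>y i. search_coord f i y 0 (y ! i + 1)) x [0..<k]"

end

theory Submission
  imports Defs
begin

text \<open>Since feasibility is monotone in each coordinate, the binary search on coordinate \<open>i\<close>
  returns the least value of that coordinate that keeps the point feasible. Lowering a later
  coordinate only shrinks the feasible region seen by an earlier one, so after the \<open>k\<close> passes no
  single coordinate of the result \<open>y\<close> can be lowered. A feasible \<open>z\<close> smaller than \<open>y\<close> has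
  \<open>z\<^sub>i < y\<^sub>i\<close> for some \<open>i\<close> and lies below \<open>y\<close> with coordinate \<open>i\<close> lowered to \<open>z\<^sub>i\<close>,
  which would then be feasible.\<close>

declare search_coord.simps [simp del]

definition coord_minimal :: "(nat list \<Rightarrow> bool) \<Rightarrow> nat \<Rightarrow> nat list \<Rightarrow> bool" where
  "coord_minimal f i y \<longleftrightarrow> (\<forall>u < y ! i. \<not> f (y[i := u]))"

lemma feasibility_function_mono:
  assumes "feasibility_function N k f" "x \<in> grid N k" "y \<in> grid N k" "leq_k k x y" "f x"
  shows "f y"
  using assms unfolding feasibility_function_def smaller_def by blast

lemma list_update_in_grid:
  assumes "x \<in> grid N k" "v \<le> N"
  shows "x[i := v] \<in> grid N k"
  using assms unfolding grid_def
  by (cases "i < length x") (auto simp: nth_list_update list_update_beyond)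

lemma search_coord_eq_Least:
  assumes "\<And>u v. u \<le> v \<Longrightarrow> v < mx \<Longrightarrow> f (x[i := u]) \<Longrightarrow> f (x[i := v])"
    and "mn < mx" and "f (x[i := mx - 1])" and "\<forall>u < mn. \<not> f (x[i := u])"
  shows "search_coord f i x mn mx = x[i := LEAST u. f (x[i := u])]"
  using assms
proof (induction f i x mn mx rule: search_coord.induct)
  case (1 f i x mn mx)
  note mono = "1.prems"(1) and feasible_top = "1.prems"(3) and infeasible_below = "1.prems"(4)
  note simps = search_coord.simps[of f i x mn mx]
  show ?case
  proof (cases "mx - mn > 1")
    case False
    then have "search_coord f i x mn mx = x[i := mn]" by (simp add: simps)
    moreover have "mn = mx - 1" using False \<open>mn < mx\<close> by linarith
    then have "(LEAST u. f (x[i := u])) = mn"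
      using feasible_top infeasible_below by (intro Least_equality) (simp, meson not_le)
    ultimately show ?thesis by simp
  next
    case True
    define mid where "mid = mn + (mx - mn - 1) div 2"
    have mid: "mn \<le> mid" "mid < mx" using True unfolding mid_def by auto
    show ?thesis
    proof (cases "f (x[i := mid])")
      case True
      have "search_coord f i (x[i := mid]) mn (mid + 1)
          = (x[i := mid])[i := LEAST u. f ((x[i := mid])[i := u])]"
      proof (rule "1.IH"(1)[OF \<open>1 < mx - mn\<close> mid_def refl True])
        fix u v assume "u \<le> v" "v < mid + 1" "f ((x[i := mid])[i := u])"
        then show "f ((x[i := mid])[i := v])" using mono[of u v] mid(2) by simp
      qed (use True mid infeasible_below in simp_all)
      then show ?thesis using \<open>1 < mx - mn\<close> True by (simp add: simps mid_def Let_def)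
    next
      case False
      have below_mid: "\<forall>u < mid + 1. \<not> f (x[i := u])"
      proof (intro allI impI notI)
        fix u assume "u < mid + 1" "f (x[i := u])"
        then have "f (x[i := mid])" using mono[of u mid] mid(2) by simp
        with False show False ..
      qed
      have "mid + 1 < mx"
      proof (rule ccontr)
        assume "\<not> mid + 1 < mx"
        then have "mid = mx - 1" using mid(2) by linarith
        with False feasible_top show False by simp
      qed
      have "search_coord f i (x[i := mid]) (mid + 1) mx
          = (x[i := mid])[i := LEAST u. f ((x[i := mid])[i := u])]"
      proof (rule "1.IH"(2)[OF \<open>1 < mx - mn\<close> mid_def refl False])
        fix u v assume "u \<le> v" "v < mx" "f ((x[i := mid])[i := u])"
        then show "f ((x[i := mid])[i := v])" using mono[of u v] by simp
      qed (use \<open>mid + 1 < mx\<close> feasible_top below_mid in simp_all)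
      then show ?thesis using \<open>1 < mx - mn\<close> False by (simp add: simps mid_def Let_def)
    qed
  qed
qed

lemma search_coord_from_feasible:
  assumes ff: "feasibility_function N k f" and y: "y \<in> grid N k" "f y" and "i < k"
  shows "search_coord f i y 0 (y ! i + 1) = y[i := LEAST u. f (y[i := u])]"
proof (rule search_coord_eq_Least)
  fix u v assume "u \<le> v" "v < y ! i + 1" "f (y[i := u])"
  moreover have "y ! i \<le> N" "length y = k" using y \<open>i < k\<close> by (simp_all add: grid_def)
  ultimately have "y[i := u] \<in> grid N k" "y[i := v] \<in> grid N k"
    and "leq_k k (y[i := u]) (y[i := v])"
    using y(1) \<open>i < k\<close> by (simp_all add: list_update_in_grid leq_k_def nth_list_update)
  then show "f (y[i := v])"
    using feasibility_function_mono[OF ff] \<open>f (y[i := u])\<close> by blast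
qed (use y in auto)

lemma update_Least:
  assumes "f y" "i < length y"
  defines "v \<equiv> LEAST u. f (y[i := u])"
  shows "v \<le> y ! i" "f (y[i := v])" "coord_minimal f i (y[i := v])"
proof -
  have "f (y[i := y ! i])" using assms by simp
  then show "v \<le> y ! i" "f (y[i := v])"
    unfolding v_def by (rule Least_le, rule LeastI)
  show "coord_minimal f i (y[i := v])"
    using assms(2) by (simp add: coord_minimal_def v_def) (blast dest: not_less_Least)
qed

lemma coord_minimal_leq_k:
  assumes ff: "feasibility_function N k f" and "y \<in> grid N k" "y' \<in> grid N k"
    and "leq_k k y' y" "y' ! i = y ! i" "i < k" "coord_minimal f i y"
  shows "coord_minimal f i y'"
  unfolding coord_minimal_def
proof (intro allI impI notI)
  fix u assume "u < y' ! i" "f (y'[i := u])"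
  moreover have "u \<le> N" using \<open>u < y' ! i\<close> assms(3,6) by (auto simp: grid_def)
  moreover have "leq_k k (y'[i := u]) (y[i := u])"
    using assms(2-4,6) by (auto simp: leq_k_def grid_def nth_list_update)
  ultimately have "f (y[i := u])"
    using feasibility_function_mono[OF ff list_update_in_grid list_update_in_grid] assms(2,3)
    by blast
  then show False using assms(5,7) \<open>u < y' ! i\<close> by (simp add: coord_minimal_def)
qed

lemma pareto_point_if_coord_minimal:
  assumes ff: "feasibility_function N k f" and y: "y \<in> grid N k" "f y"
    and minimal: "\<forall>i < k. coord_minimal f i y"
  shows "pareto_point N k f y"
  unfolding pareto_point_def
proof (intro conjI ballI impI notI y)
  fix z assume z: "z \<in> grid N k" "smaller k z y" "f z"
  have len: "length z = k" "length y = k" using z(1) y(1) by (simp_all add: grid_def)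
  then obtain i where i: "i < k" "z ! i \<noteq> y ! i"
    using z(2) unfolding smaller_def by (metis nth_equalityI)
  then have "z ! i < y ! i" using z(2) by (simp add: smaller_def leq_k_def le_neq_implies_less)
  have "leq_k k z (y[i := z ! i])"
    using z(2) len i(1) by (auto simp: smaller_def leq_k_def nth_list_update)
  moreover have "y[i := z ! i] \<in> grid N k"
    using y(1) z(1) i(1) by (intro list_update_in_grid) (auto simp: grid_def)
  ultimately have "f (y[i := z ! i])"
    using feasibility_function_mono[OF ff z(1)] z(3) by blast
  then show False
    using minimal i(1) \<open>z ! i < y ! i\<close> unfolding coord_minimal_def by blast
qed

lemma search_prefix_invariant:
  assumes ff: "feasibility_function N k f" and x: "x \<in> grid N k" "f x" and "j \<le> k"
  defines "y \<equiv> foldl (\<lambda>y i. search_coord f i y 0 (y ! i + 1)) x [0..<j]"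
  shows "y \<in> grid N k \<and> f y \<and> leq_k k y x \<and> (\<forall>i < j. coord_minimal f i y)"
  using \<open>j \<le> k\<close> unfolding y_def
proof (induction j)
  case 0
  then show ?case using x by (simp add: leq_k_def)
next
  case (Suc j)
  define y where "y = foldl (\<lambda>y i. search_coord f i y 0 (y ! i + 1)) x [0..<j]"
  define v where "v = (LEAST u. f (y[j := u]))"
  have IH: "y \<in> grid N k" "f y" "leq_k k y x" "\<forall>i < j. coord_minimal f i y"
    using Suc by (simp_all add: y_def)
  have "j < k" "length y = k" using Suc.prems IH(1) by (auto simp: grid_def)
  then have v: "v \<le> y ! j" "f (y[j := v])" "coord_minimal f j (y[j := v])"
    using update_Least[of f y j] IH(2) unfolding v_def by auto
  have "foldl (\<lambda>y i. search_coord f i y 0 (y ! i + 1)) x [0..<Suc j]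
      = search_coord f j y 0 (y ! j + 1)"
    unfolding y_def by simp
  also have "\<dots> = y[j := v]"
    unfolding v_def by (rule search_coord_from_feasible[OF ff IH(1,2) \<open>j < k\<close>])
  finally have fold_Suc:
    "foldl (\<lambda>y i. search_coord f i y 0 (y ! i + 1)) x [0..<Suc j] = y[j := v]" .
  have "y ! j \<le> N" using IH(1) \<open>j < k\<close> by (simp add: grid_def)
  then have grid': "y[j := v] \<in> grid N k"
    using IH(1) v(1) by (simp add: list_update_in_grid)
  have leq': "leq_k k (y[j := v]) y"
    using v(1) \<open>length y = k\<close> \<open>j < k\<close> by (simp add: leq_k_def nth_list_update)
  have "coord_minimal f i (y[j := v])" if "i < Suc j" for i
  proof (cases "i = j")
    case True
    then show ?thesis using v(3) by simp
  next
    case False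
    then show ?thesis
      using coord_minimal_leq_k[OF ff IH(1) grid' leq'] IH(4) that \<open>j < k\<close> by simp
  qed
  moreover have "leq_k k (y[j := v]) x"
    using leq' IH(3) unfolding leq_k_def by (meson order_trans)
  ultimately show ?case
    unfolding fold_Suc using grid' v(2) by blast
qed

theorem lemma1:
  fixes N k :: nat and f :: "nat list \<Rightarrow> bool" and x :: "nat list"
  assumes "k \<ge> 1"
    and "feasibility_function N k f"
    and "x \<in> grid N k"
    and "f x"
  shows "pareto_point N k f (search_pareto_point x k f)
         \<and> leq_k k (search_pareto_point x k f) x"
  using search_prefix_invariant[OF assms(2-4) order_refl]
    pareto_point_if_coord_minimal[OF assms(2)]
  unfolding search_pareto_point_def by blast

end
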